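(* Assume the standing assumptions below with $\beta=0$ and $\xi\ge0$. (a) If $(\theta^k,u^k,w^k)$ solves one step (D1)–(D3) of the time-discrete scheme, then a.e. in $\Omega$ $$u^k=P_{[0,1]}\Big(\frac{g^k}{\mu/\tau+\xi}\Big),\qquad g^k:=\frac{\mu}{\tau}u^{k-1}+\gamma*u^k+c_Fm(\theta^{k-1})-\frac{c_F}{2}.$$ (b) (Steady state.) If $u\in\mathcal K$ and a measurable $\theta:\Omega\to\mathbb{R}$ satisfy $(Bu-c_Fu+c_F/2-c_Fm(\theta),\zeta-u)\ge0$ for all $\zeta\in\mathcal K$, then for $\xi>0$, $u=P_{[0,1]}\big(\xi^{-1}(\gamma*u-c_F/2+c_Fm(\theta))\big)$ a.e. in $\Omega$; and if $\xi=0$ and the set $\{x\in\Omega:\gamma*u(x)-c_F/2+c_Fm(\theta(x))=0\}$ has measure zero, then $u(x)\in\{0,1\}$ for a.e. $x\in\Omega$.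
   Context: Standing assumptions. $\Omega\subset\mathbb{R}^n$, $n\le 3$, bounded domain. Kernel $\gamma:\mathbb{R}^n\to[0,\infty)$ with $\gamma\in L^1(\mathbb{R}^n)$, $\gamma(x)=\hat\gamma(|x|)$, $(0,\sigma)\subset\operatorname{supp}\hat\gamma\subset(0,\delta]$ for some $\sigma,\delta>0$. $\Omega_I=\{y\in\mathbb{R}^n\setminus\Omega:\gamma(x-y)\ne0\text{ for some }x\in\Omega\}$; functions are extended by zero outside $\Omega\cup\Omega_I$, $\gamma*u(x)=\int_{\Omega\cup\Omega_I}\gamma(x-y)u(y)dy$. $c_\gamma=\int_{\Omega\cup\Omega_I}\gamma(x-y)dy$ (constant for $x\in\Omega$). $Bu=c_\gamma u-\gamma*u$, i.e. $Bu(x)=\int_{\Omega\cup\Omega_I}(u(x)-u(y))\gamma(x-y)dy$; $\mathcal Nu$ is the same integral on $\Omega_I$. $V_B=\{v\in L^2(\Omega\cup\Omega_I):\mathcal Nv=0\text{ on }\Omega_I\}$, $\mathcal K=\{v\in V_B:0\le v\le 1\text{ a.e. in }\Omega\}$. $(\cdot,\cdot)$ is the $L^2(\Omega)$ inner product. Parameters $D>0$, $L\in\mathbb{R}$, $\mu>0$, $c_F>0$, $\tau>0$, $\xi:=c_\gamma-c_F$; $m:\mathbb{R}\to\mathbb{R}$ with $|m|\le1/2$, $|m'|\le C_m$. With $\beta=0$, $V_A=L^2(\Omega)$ and the time-discrete scheme reads: given $\theta^{k-1}\in H^1(\Omega)$, $u^{k-1}\in\mathcal K$, find $(\theta^k,u^k,w^k)\in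 H^1(\Omega)\times\mathcal K\times L^2(\Omega)$ with (D1) $(\theta^k-\theta^{k-1},\phi)+D\tau(\nabla\theta^k,\nabla\phi)-L(u^k-u^{k-1},\phi)=0$ for all $\phi\in H^1(\Omega)$; (D2) $\mu(u^k-u^{k-1},\psi)+\tau(w^k,\psi)=0$ for all $\psi\in L^2(\Omega)$; (D3) $(Bu^k-c_Fu^k+c_F/2-c_Fm(\theta^{k-1})-w^k,\zeta-u^k)\ge0$ for all $\zeta\in\mathcal K$. $P_{[0,1]}(s)=\min\{1,\max\{0,s\}\}$ pointwise. *)

theory Defs
  imports "HOL-Analysis.Analysis"
begin

text \<open>f belongs to L2(S): f restricted to S is Lebesgue measurable and f squared is integrable on S.
  Functions are identified with their restriction to S (values outside S are irrelevant).\<close>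
definition L2 :: "'a::euclidean_space set \<Rightarrow> ('a \<Rightarrow> real) \<Rightarrow> bool" where
  "L2 S f \<longleftrightarrow> (\<lambda>x. indicator S x * f x) \<in> borel_measurable lebesgue
              \<and> set_integrable lebesgue S (\<lambda>x. (f x)\<^sup>2)"

definition ip :: "'a::euclidean_space set \<Rightarrow> ('a \<Rightarrow> real) \<Rightarrow> ('a \<Rightarrow> real) \<Rightarrow> real" where
  "ip S f g = (LINT x:S|lebesgue. f x * g x)"

definition ddir :: "'a::euclidean_space \<Rightarrow> ('a \<Rightarrow> real) \<Rightarrow> 'a \<Rightarrow> real" where
  "ddir v f x = deriv (\<lambda>t. f (x + t *\<^sub>R v)) 0"

definition iter_partial :: "'a::euclidean_space list \<Rightarrow> ('a \<Rightarrow> real) \<Rightarrow> 'a \<Rightarrow> real" where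
  "iter_partial ds f = foldr ddir ds f"

definition smooth_fun :: "('a::euclidean_space \<Rightarrow> real) \<Rightarrow> bool" where
  "smooth_fun f \<longleftrightarrow> (\<forall>ds. set ds \<subseteq> Basis \<longrightarrow>
       continuous_on UNIV (iter_partial ds f) \<and>
       (\<forall>v\<in>Basis. \<forall>x. (\<lambda>t. iter_partial ds f (x + t *\<^sub>R v)) differentiable (at 0)))"

definition test_fun :: "'a::euclidean_space set \<Rightarrow> ('a \<Rightarrow> real) \<Rightarrow> bool" where
  "test_fun \<Omega> \<phi> \<longleftrightarrow> smooth_fun \<phi> \<and> compact (closure {x. \<phi> x \<noteq> 0})
                     \<and> closure {x. \<phi> x \<noteq> 0} \<subseteq> \<Omega>"

definition weak_grad :: "'a::euclidean_space set \<Rightarrow> ('a \<Rightarrow> real) \<Rightarrow> ('a \<Rightarrow> 'a) \<Rightarrow> bool" where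
  "weak_grad \<Omega> f G \<longleftrightarrow> (\<forall>\<phi>. test_fun \<Omega> \<phi> \<longrightarrow> (\<forall>i\<in>Basis.
       (LINT x:\<Omega>|lebesgue. f x * ddir i \<phi> x) = - (LINT x:\<Omega>|lebesgue. (G x \<bullet> i) * \<phi> x)))"

definition H1 :: "'a::euclidean_space set \<Rightarrow> ('a \<Rightarrow> real) \<Rightarrow> ('a \<Rightarrow> 'a) \<Rightarrow> bool" where
  "H1 \<Omega> f G \<longleftrightarrow> L2 \<Omega> f \<and> (\<forall>i\<in>Basis. L2 \<Omega> (\<lambda>x. G x \<bullet> i)) \<and> weak_grad \<Omega> f G"

definition ip_grad :: "'a::euclidean_space set \<Rightarrow> ('a \<Rightarrow> 'a) \<Rightarrow> ('a \<Rightarrow> 'a) \<Rightarrow> real" where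
  "ip_grad S F G = (LINT x:S|lebesgue. F x \<bullet> G x)"

definition interaction_dom :: "'a::euclidean_space set \<Rightarrow> ('a \<Rightarrow> real) \<Rightarrow> 'a set" where
  "interaction_dom \<Omega> \<gamma> = {y. y \<notin> \<Omega> \<and> (\<exists>x\<in>\<Omega>. \<gamma> (x - y) \<noteq> 0)}"

definition conv :: "('a::euclidean_space \<Rightarrow> real) \<Rightarrow> 'a set \<Rightarrow> ('a \<Rightarrow> real) \<Rightarrow> 'a \<Rightarrow> real" where
  "conv \<gamma> U u x = (LINT y:U|lebesgue. \<gamma> (x - y) * u y)"

text \<open>The nonlocal operator: integral over U of (u(x)-u(y)) gamma(x-y) dy.
  On Omega this is Bu, on Omega_I it is Nu.\<close>
definition nonloc :: "('a::euclidean_space \<Rightarrow> real) \<Rightarrow> 'a set \<Rightarrow> ('a \<Rightarrow> real) \<Rightarrow> 'a \<Rightarrow> real" where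
  "nonloc \<gamma> U u x = (LINT y:U|lebesgue. (u x - u y) * \<gamma> (x - y))"

definition V_B :: "'a::euclidean_space set \<Rightarrow> ('a \<Rightarrow> real) \<Rightarrow> ('a \<Rightarrow> real) set" where
  "V_B \<Omega> \<gamma> = {v. L2 (\<Omega> \<union> interaction_dom \<Omega> \<gamma>) v \<and>
     (AE x in lebesgue. x \<in> interaction_dom \<Omega> \<gamma> \<longrightarrow>
        nonloc \<gamma> (\<Omega> \<union> interaction_dom \<Omega> \<gamma>) v x = 0)}"

definition Kset :: "'a::euclidean_space set \<Rightarrow> ('a \<Rightarrow> real) \<Rightarrow> ('a \<Rightarrow> real) set" where
  "Kset \<Omega> \<gamma> = {v \<in> V_B \<Omega> \<gamma>. AE x in lebesgue. x \<in> \<Omega> \<longrightarrow> 0 \<le> v x \<and> v x \<le> 1}"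

definition P01 :: "real \<Rightarrow> real" where
  "P01 s = min 1 (max 0 s)"

end

theory Submission
  imports Defs
begin

text \<open>On \<open>\<Omega>\<close> we have \<open>B u = c\<^sub>\<gamma> u - \<gamma> * u\<close>, and (D2) says \<open>w = -(\<mu>/\<tau>)(u1 - u0)\<close>. Hence both
  variational inequalities read \<open>(l u - g, \<zeta> - u) \<ge> 0\<close> for all \<open>\<zeta> \<in> K\<close>, with \<open>l = \<mu>/\<tau> + \<xi>\<close>
  resp. \<open>l = \<xi>\<close>. Testing with \<open>\<zeta>\<close> equal to \<open>0\<close> or \<open>1\<close> on an arbitrary measurable subset of \<open>\<Omega>\<close>
  and to \<open>u\<close> elsewhere localises this to the complementarity conditions
  \<open>u < 1 \<Longrightarrow> g \<le> l u\<close> and \<open>0 < u \<Longrightarrow> l u \<le> g\<close> a.e., which for \<open>l > 0\<close> say \<open>u = P01 (g / l)\<close>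
  and for \<open>l = 0\<close>, \<open>g \<noteq> 0\<close> force \<open>u \<in> {0, 1}\<close>.
  The delicate point is that such test functions must lie in \<open>K\<close>: their values on \<open>\<Omega>\<^sub>I\<close> have
  to be chosen so that the nonlocal Neumann condition \<open>N \<zeta> = 0\<close> holds there.\<close>

section \<open>Reflections and translations of Lebesgue measure\<close>

lemma lborel_distr_reflect:
  "distr lborel borel (\<lambda>y. x - y) = (lborel :: 'a::euclidean_space measure)"
proof -
  have "lborel = density (distr lborel borel (\<lambda>y. x + (-1::real) *\<^sub>R y)) (\<lambda>_. \<bar>-1::real\<bar>^DIM('a))"
    by (rule lborel_affine) simp
  then show ?thesis by (simp add: density_1)
qed

lemma nn_integral_lborel_reflect:
  fixes f :: "'a::euclidean_space \<Rightarrow> ennreal"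
  assumes "f \<in> borel_measurable borel"
  shows "(\<integral>\<^sup>+y. f (x - y) \<partial>lborel) = (\<integral>\<^sup>+z. f z \<partial>lborel)"
proof -
  have "(\<integral>\<^sup>+z. f z \<partial>lborel) = (\<integral>\<^sup>+z. f z \<partial>(distr lborel borel (\<lambda>y. x - y)))"
    by (simp add: lborel_distr_reflect)
  also have "\<dots> = (\<integral>\<^sup>+y. f (x - y) \<partial>lborel)"
    by (subst nn_integral_distr) (use assms in auto)
  finally show ?thesis ..
qed

lemma nn_integral_lborel_translate:
  fixes f :: "'a::euclidean_space \<Rightarrow> ennreal"
  assumes "f \<in> borel_measurable borel"
  shows "(\<integral>\<^sup>+x. f (x - y) \<partial>lborel) = (\<integral>\<^sup>+z. f z \<partial>lborel)"
proof -
  have "(\<integral>\<^sup>+z. f z \<partial>lborel) = (\<integral>\<^sup>+z. f z \<partial>(distr lborel borel ((+) (-y))))"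
    by (simp add: lborel_distr_plus)
  also have "\<dots> = (\<integral>\<^sup>+x. f (x - y) \<partial>lborel)"
    by (subst nn_integral_distr) (use assms in auto)
  finally show ?thesis ..
qed

lemma AE_lborel_reflect:
  fixes x :: "'a::euclidean_space"
  assumes "AE z in lborel. P z"
  shows "AE y in lborel. P (x - y)"
proof -
  obtain N where N: "N \<in> null_sets lborel" "{z \<in> space lborel. \<not> P z} \<subseteq> N"
    using AE_E[OF assms] by (metis null_setsI)
  have "emeasure lborel ((\<lambda>y. x - y) -` N \<inter> space lborel) = emeasure (distr lborel borel (\<lambda>y. x - y)) N"
    using N by (subst emeasure_distr) auto
  also have "\<dots> = 0" using N by (simp add: lborel_distr_reflect null_setsD1)
  finally have "(\<lambda>y. x - y) -` N \<inter> space lborel \<in> null_sets lborel"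
    using N measurable_sets_borel[of "\<lambda>y. x - y" borel N] by (auto simp: null_sets_def)
  then show ?thesis
    by (rule AE_I') (use N in auto)
qed

lemma AE_lebesgue_reflect:
  fixes x :: "'a::euclidean_space"
  assumes "AE z in lebesgue. P z"
  shows "AE y in lebesgue. P (x - y)"
  using AE_lborel_reflect[of P x] assms by (simp add: AE_completion_iff)

lemma borel_measurable_lebesgue_AE_eq:
  fixes f g :: "'a::euclidean_space \<Rightarrow> real"
  assumes "g \<in> borel_measurable lebesgue" "AE x in lebesgue. f x = g x"
  shows "f \<in> borel_measurable lebesgue"
proof (rule measurableI)
  fix B :: "real set" assume B: "B \<in> sets borel"
  have "g -` B \<inter> space lebesgue \<in> sets lebesgue" using measurable_sets[OF assms(1) B] .
  moreover have ae: "AE x in lebesgue. x \<in> g -` B \<inter> space lebesgue \<longleftrightarrow> x \<in> f -` B \<inter> space lebesgue"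
    using assms(2) by (rule eventually_mono) auto
  ultimately show "f -` B \<inter> space lebesgue \<in> sets (lebesgue :: 'a measure)"
    using completion.in_sets_AE[OF ae] by simp
qed auto

lemma borel_measurable_restrict_lebesgue_iff:
  fixes f :: "'a::euclidean_space \<Rightarrow> real"
  assumes "S \<in> sets lebesgue"
  shows "f \<in> borel_measurable (restrict_space lebesgue S) \<longleftrightarrow>
    (\<lambda>x. indicator S x * f x) \<in> borel_measurable lebesgue"
  using borel_measurable_restrict_space_iff[of S lebesgue f] assms by simp

lemma L2_borel_measurable_restrict:
  assumes "L2 S f" "S \<in> sets lebesgue"
  shows "f \<in> borel_measurable (restrict_space lebesgue S)"
  using assms by (simp add: L2_def borel_measurable_restrict_lebesgue_iff)

lemma H1_borel_measurable_restrict: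
  "H1 \<Omega> \<theta> G \<Longrightarrow> \<Omega> \<in> sets lebesgue \<Longrightarrow> \<theta> \<in> borel_measurable (restrict_space lebesgue \<Omega>)"
  by (simp add: H1_def L2_borel_measurable_restrict)

lemma L2_subset:
  assumes f: "L2 S f" and T: "T \<in> sets lebesgue" "T \<subseteq> S"
  shows "L2 T f"
  unfolding L2_def set_integrable_def
proof
  have [measurable]: "(\<lambda>x. indicator S x * f x) \<in> borel_measurable lebesgue" "T \<in> sets lebesgue"
    using f T by (simp_all add: L2_def)
  have "(\<lambda>x. indicator T x * f x) = (\<lambda>x. indicator T x * (indicator S x * f x))"
    using T by (auto simp: indicator_def fun_eq_iff)
  then show "(\<lambda>x. indicator T x * f x) \<in> borel_measurable lebesgue"
    by simp
  have "(\<lambda>x. indicator T x *\<^sub>R (f x)\<^sup>2) = (\<lambda>x. indicator T x * (indicator S x *\<^sub>R (f x)\<^sup>2))"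
    using T by (auto simp: indicator_def fun_eq_iff)
  then show "integrable lebesgue (\<lambda>x. indicator T x *\<^sub>R (f x)\<^sup>2)"
    using integrable_mult_indicator[OF T(1), of "\<lambda>x. indicator S x *\<^sub>R (f x)\<^sup>2"] f
    by (simp add: L2_def set_integrable_def)
qed

lemma L2_set_integrable_mult:
  assumes f: "L2 S f" and k: "L2 S k"
  shows "set_integrable lebesgue S (\<lambda>x. f x * k x)"
proof -
  have fm: "(\<lambda>x. indicator S x * f x) \<in> borel_measurable lebesgue"
    and fi: "integrable lebesgue (\<lambda>x. indicator S x *\<^sub>R (f x)\<^sup>2)"
    using f unfolding L2_def set_integrable_def by auto
  have km: "(\<lambda>x. indicator S x * k x) \<in> borel_measurable lebesgue"
    and ki: "integrable lebesgue (\<lambda>x. indicator S x *\<^sub>R (k x)\<^sup>2)"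
    using k unfolding L2_def set_integrable_def by auto
  have eq: "(\<lambda>x. indicator S x *\<^sub>R (f x * k x)) = (\<lambda>x. (indicator S x * f x) * (indicator S x * k x))"
    by (auto simp: indicator_def fun_eq_iff)
  show ?thesis unfolding set_integrable_def
  proof (rule Bochner_Integration.integrable_bound[OF Bochner_Integration.integrable_add[OF fi ki]])
    show "(\<lambda>x. indicator S x *\<^sub>R (f x * k x)) \<in> borel_measurable lebesgue"
      unfolding eq using fm km by measurable
    show "AE x in lebesgue. norm (indicator S x *\<^sub>R (f x * k x)) \<le>
        norm (indicator S x *\<^sub>R (f x)\<^sup>2 + indicator S x *\<^sub>R (k x)\<^sup>2)"
    proof (intro AE_I2)
      fix x
      have "\<bar>f x * k x\<bar> \<le> (f x)\<^sup>2 + (k x)\<^sup>2"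
        using sum_squares_bound[of "\<bar>f x\<bar>" "\<bar>k x\<bar>"] abs_ge_zero[of "f x * k x"]
        unfolding abs_mult power2_abs by linarith
      then show "norm (indicator S x *\<^sub>R (f x * k x)) \<le>
          norm (indicator S x *\<^sub>R (f x)\<^sup>2 + indicator S x *\<^sub>R (k x)\<^sup>2)"
        by (auto simp: indicator_def)
    qed
  qed
qed

lemma L2_set_integrable:
  assumes f: "L2 S f" and S: "S \<in> sets lebesgue" "emeasure lebesgue S < \<infinity>"
  shows "set_integrable lebesgue S f"
proof -
  have "L2 S (\<lambda>_. 1)"
    using S integrable_real_indicator[OF S]
    by (simp add: L2_def set_integrable_def borel_measurable_indicator)
  then show ?thesis
    using L2_set_integrable_mult[OF f, of "\<lambda>_. 1"] by simp
qed

lemma L2_lincomb: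
  assumes f: "L2 S f" and k: "L2 S k"
  shows "L2 S (\<lambda>x. a * f x + b * k x)"
proof -
  have fm: "(\<lambda>x. indicator S x * f x) \<in> borel_measurable lebesgue"
    and fi: "integrable lebesgue (\<lambda>x. indicator S x *\<^sub>R (f x)\<^sup>2)"
    using f unfolding L2_def set_integrable_def by auto
  have km: "(\<lambda>x. indicator S x * k x) \<in> borel_measurable lebesgue"
    and ki: "integrable lebesgue (\<lambda>x. indicator S x *\<^sub>R (k x)\<^sup>2)"
    using k unfolding L2_def set_integrable_def by auto
  have eq: "(\<lambda>x. indicator S x * (a * f x + b * k x)) =
      (\<lambda>x. a * (indicator S x * f x) + b * (indicator S x * k x))"
    by (auto simp: indicator_def fun_eq_iff)
  have m: "(\<lambda>x. indicator S x * (a * f x + b * k x)) \<in> borel_measurable lebesgue"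
    unfolding eq using fm km by measurable
  have eq2: "(\<lambda>x. indicator S x *\<^sub>R (a * f x + b * k x)\<^sup>2) =
      (\<lambda>x. (indicator S x * (a * f x + b * k x))\<^sup>2)"
    by (auto simp: indicator_def fun_eq_iff)
  have i: "integrable lebesgue (\<lambda>x. indicator S x *\<^sub>R (a * f x + b * k x)\<^sup>2)"
  proof (rule Bochner_Integration.integrable_bound[OF Bochner_Integration.integrable_add[OF
        integrable_mult_right[OF fi, of "2 * a\<^sup>2"] integrable_mult_right[OF ki, of "2 * b\<^sup>2"]]])
    show "(\<lambda>x. indicator S x *\<^sub>R (a * f x + b * k x)\<^sup>2) \<in> borel_measurable lebesgue"
      unfolding eq2 using m by measurable
    show "AE x in lebesgue. norm (indicator S x *\<^sub>R (a * f x + b * k x)\<^sup>2) \<le>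
        norm (2 * a\<^sup>2 * (indicator S x *\<^sub>R (f x)\<^sup>2) + 2 * b\<^sup>2 * (indicator S x *\<^sub>R (k x)\<^sup>2))"
    proof (intro AE_I2)
      fix x
      have "0 \<le> (a * f x - b * k x)\<^sup>2" by simp
      then have "(a * f x + b * k x)\<^sup>2 \<le> 2 * a\<^sup>2 * (f x)\<^sup>2 + 2 * b\<^sup>2 * (k x)\<^sup>2"
        by (simp add: power2_eq_square algebra_simps)
      then show "norm (indicator S x *\<^sub>R (a * f x + b * k x)\<^sup>2) \<le>
          norm (2 * a\<^sup>2 * (indicator S x *\<^sub>R (f x)\<^sup>2) + 2 * b\<^sup>2 * (indicator S x *\<^sub>R (k x)\<^sup>2))"
        by (auto simp: indicator_def)
    qed
  qed
  show ?thesis unfolding L2_def set_integrable_def using m i by simp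
qed

lemma ip_lincomb_left:
  assumes f: "L2 S f" and k: "L2 S k" and q: "L2 S q"
  shows "ip S (\<lambda>x. a * f x + b * k x) q = a * ip S f q + b * ip S k q"
proof -
  have i1: "integrable lebesgue (\<lambda>x. indicator S x *\<^sub>R (f x * q x))"
    using L2_set_integrable_mult[OF f q] unfolding set_integrable_def .
  have i2: "integrable lebesgue (\<lambda>x. indicator S x *\<^sub>R (k x * q x))"
    using L2_set_integrable_mult[OF k q] unfolding set_integrable_def .
  have "ip S (\<lambda>x. a * f x + b * k x) q =
      (\<integral>x. a * (indicator S x *\<^sub>R (f x * q x)) + b * (indicator S x *\<^sub>R (k x * q x)) \<partial>lebesgue)"
    unfolding ip_def set_lebesgue_integral_def
    by (rule Bochner_Integration.integral_cong) (auto simp: algebra_simps)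
  also have "\<dots> = a * ip S f q + b * ip S k q"
    using i1 i2 unfolding ip_def set_lebesgue_integral_def by simp
  finally show ?thesis .
qed

lemma ip_self_eq_0_imp_AE_eq_0:
  assumes f: "L2 S f" and z: "ip S f f = 0"
  shows "AE x in lebesgue. x \<in> S \<longrightarrow> f x = 0"
proof -
  have fi: "integrable lebesgue (\<lambda>x. indicator S x *\<^sub>R (f x)\<^sup>2)"
    using f unfolding L2_def set_integrable_def by auto
  have "(\<integral>x. indicator S x *\<^sub>R (f x)\<^sup>2 \<partial>lebesgue) = 0"
    using z unfolding ip_def set_lebesgue_integral_def by (simp add: power2_eq_square)
  then have "AE x in lebesgue. indicator S x *\<^sub>R (f x)\<^sup>2 = 0"
    using integral_nonneg_eq_0_iff_AE[OF fi] by (simp add: indicator_def)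
  then show ?thesis by eventually_elim (auto simp: indicator_def)
qed

lemma ip_lincomb_orthogonal_imp_AE_eq_0:
  assumes a: "L2 S a" and w: "L2 S w"
    and orth: "\<forall>\<psi>. L2 S \<psi> \<longrightarrow> \<mu> * ip S a \<psi> + \<tau> * ip S w \<psi> = 0"
  shows "AE x in lebesgue. x \<in> S \<longrightarrow> \<tau> * w x + \<mu> * a x = 0"
proof -
  have \<psi>: "L2 S (\<lambda>x. \<tau> * w x + \<mu> * a x)" by (rule L2_lincomb[OF w a])
  have "ip S (\<lambda>x. \<tau> * w x + \<mu> * a x) (\<lambda>x. \<tau> * w x + \<mu> * a x) = 0"
    using ip_lincomb_left[OF w a \<psi>, of \<tau> \<mu>] orth \<psi> by (simp add: add.commute)
  then show ?thesis by (rule ip_self_eq_0_imp_AE_eq_0[OF \<psi>])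
qed

section \<open>Localising variational inequalities\<close>

lemma AE_nonneg_if_set_integrals_nonneg:
  fixes f :: "'a::euclidean_space \<Rightarrow> real"
  assumes S: "S \<in> sets lebesgue" and fin: "emeasure lebesgue S < \<infinity>"
    and fm: "f \<in> borel_measurable (restrict_space lebesgue S)"
    and nonneg: "\<And>A. A \<in> sets lebesgue \<Longrightarrow> A \<subseteq> S \<Longrightarrow> set_integrable lebesgue A f \<Longrightarrow>
        (LINT x:A|lebesgue. f x) \<ge> 0"
  shows "AE x in lebesgue. x \<in> S \<longrightarrow> 0 \<le> f x"
proof -
  define F where "F x = indicator S x * f x" for x
  have [measurable]: "F \<in> borel_measurable lebesgue"
    using fm S unfolding F_def[abs_def] by (simp add: borel_measurable_restrict_lebesgue_iff)
  define A where "A n = {x. F x < 0 \<and> - F x \<le> real n}" for n :: nat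
  have A_sets[measurable]: "A n \<in> sets lebesgue" for n
  proof -
    have "{x \<in> space lebesgue. F x < 0 \<and> - F x \<le> real n} \<in> sets lebesgue" by measurable
    then show ?thesis by (simp add: A_def)
  qed
  have A_sub: "A n \<subseteq> S" for n by (auto simp: A_def F_def indicator_def split: if_splits)
  have A_null: "AE x in lebesgue. x \<notin> A n" for n
  proof -
    have eq: "(\<lambda>x. indicator (A n) x *\<^sub>R f x) = (\<lambda>x. indicator (A n) x * F x)"
      using A_sub[of n] by (auto simp: indicator_def F_def fun_eq_iff)
    have "emeasure lebesgue (A n) < \<infinity>"
      using emeasure_mono[OF A_sub[of n], of lebesgue] S fin by (simp add: le_less_trans)
    then have int: "integrable lebesgue (\<lambda>x. indicator (A n) x * F x)"
      by (intro integrableI_bounded_set[where A="A n" and B="real n"])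
         (use A_sets[of n] in \<open>auto simp: A_def indicator_def\<close>)
    then have "set_integrable lebesgue (A n) f" unfolding set_integrable_def eq .
    from nonneg[OF A_sets A_sub this] have ge: "0 \<le> (\<integral>x. indicator (A n) x * F x \<partial>lebesgue)"
      unfolding set_lebesgue_integral_def eq .
    have "0 \<le> (\<integral>x. - (indicator (A n) x * F x) \<partial>lebesgue)"
      by (intro integral_nonneg_AE AE_I2) (auto simp: A_def indicator_def)
    with ge have "(\<integral>x. - (indicator (A n) x * F x) \<partial>lebesgue) = 0" by simp
    then have "AE x in lebesgue. - (indicator (A n) x * F x) = 0"
      using integral_nonneg_eq_0_iff_AE[of lebesgue "\<lambda>x. - (indicator (A n) x * F x)"] int
      by (auto simp: A_def indicator_def)
    then show ?thesis by eventually_elim (auto simp: A_def indicator_def)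
  qed
  have "AE x in lebesgue. \<forall>n. x \<notin> A n" using A_null by (simp add: AE_all_countable)
  then show ?thesis
  proof eventually_elim
    case (elim x)
    show ?case
    proof (intro impI, rule ccontr)
      assume "x \<in> S" and "\<not> 0 \<le> f x"
      then have "F x < 0" by (simp add: F_def)
      moreover obtain n :: nat where "- F x \<le> real n" using real_arch_simple by blast
      ultimately show False using elim by (auto simp: A_def)
    qed
  qed
qed

lemma variational_inequality_complementarity:
  fixes K :: "('a::euclidean_space \<Rightarrow> real) set" and u F Fa :: "'a \<Rightarrow> real"
  assumes S: "S \<in> sets lebesgue" and fin: "emeasure lebesgue S < \<infinity>"
    and K_extends: "\<And>h. h \<in> borel_measurable (restrict_space lebesgue S) \<Longrightarrow>
        (AE x in lebesgue. x \<in> S \<longrightarrow> 0 \<le> h x \<and> h x \<le> 1) \<Longrightarrow>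
        \<exists>\<zeta>\<in>K. AE x in lebesgue. x \<in> S \<longrightarrow> \<zeta> x = h x"
    and u_meas[measurable]: "u \<in> borel_measurable (restrict_space lebesgue S)"
    and u_01: "AE x in lebesgue. x \<in> S \<longrightarrow> 0 \<le> u x \<and> u x \<le> 1"
    and Fa_meas[measurable]: "Fa \<in> borel_measurable (restrict_space lebesgue S)"
    and F_eq: "AE x in lebesgue. x \<in> S \<longrightarrow> F x = Fa x"
    and VI: "\<forall>\<zeta>\<in>K. ip S F (\<lambda>x. \<zeta> x - u x) \<ge> 0"
  shows "AE x in lebesgue. x \<in> S \<longrightarrow> (u x < 1 \<longrightarrow> 0 \<le> Fa x) \<and> (0 < u x \<longrightarrow> Fa x \<le> 0)"
proof -
  have tested: "AE x in lebesgue. x \<in> S \<longrightarrow> 0 \<le> Fa x * (t - u x)"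
    if t: "t = 0 \<or> t = 1" for t :: real
  proof (rule AE_nonneg_if_set_integrals_nonneg[OF S fin])
    show "(\<lambda>x. Fa x * (t - u x)) \<in> borel_measurable (restrict_space lebesgue S)"
      by measurable
    fix A assume A[measurable]: "A \<in> sets lebesgue" and A_sub: "A \<subseteq> S"
      and A_int: "set_integrable lebesgue A (\<lambda>x. Fa x * (t - u x))"
    define h where "h x = (if x \<in> A then t else u x)" for x
    have "A \<in> sets (restrict_space lebesgue S)"
      using A A_sub S by (simp add: sets_restrict_space_iff Int_absorb2)
    then have "h \<in> borel_measurable (restrict_space lebesgue S)"
      unfolding h_def by measurable
    moreover have "AE x in lebesgue. x \<in> S \<longrightarrow> 0 \<le> h x \<and> h x \<le> 1"
      using u_01 by eventually_elim (use t in \<open>auto simp: h_def\<close>)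
    ultimately obtain \<zeta> where "\<zeta> \<in> K" and \<zeta>_eq: "AE x in lebesgue. x \<in> S \<longrightarrow> \<zeta> x = h x"
      using K_extends by blast
    let ?R = "\<lambda>x. indicator A x *\<^sub>R (Fa x * (t - u x))"
    have R_meas: "?R \<in> borel_measurable lebesgue"
      using A_int unfolding set_integrable_def by auto
    have ae: "AE x in lebesgue. indicator S x *\<^sub>R (F x * (\<zeta> x - u x)) = ?R x"
      using \<zeta>_eq F_eq by eventually_elim (use A_sub in \<open>auto simp: h_def indicator_def\<close>)
    have "ip S F (\<lambda>x. \<zeta> x - u x) = (\<integral>x. ?R x \<partial>lebesgue)"
      unfolding ip_def set_lebesgue_integral_def
      by (rule integral_cong_AE[OF borel_measurable_lebesgue_AE_eq[OF R_meas ae] R_meas ae])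
    then show "(LINT x:A|lebesgue. Fa x * (t - u x)) \<ge> 0"
      using VI \<open>\<zeta> \<in> K\<close> unfolding set_lebesgue_integral_def by auto
  qed
  show ?thesis
    using tested[of 0, simplified] tested[of 1, simplified] u_01
    by eventually_elim (auto simp: zero_le_mult_iff mult_le_0_iff)
qed

lemma P01_eq_if_complementarity:
  fixes l u g :: real
  assumes l: "0 < l" and u: "0 \<le> u" "u \<le> 1"
    and below_1: "u < 1 \<longrightarrow> 0 \<le> l * u - g" and above_0: "0 < u \<longrightarrow> l * u - g \<le> 0"
  shows "u = P01 (g / l)"
proof -
  consider "u = 0" | "u = 1" | "0 < u \<and> u < 1" using u by linarith
  then show ?thesis
  proof cases
    case 1
    then have "g / l \<le> 0" using below_1 l by (simp add: divide_nonpos_pos)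
    then show ?thesis using 1 by (simp add: P01_def)
  next
    case 2
    then have "1 \<le> g / l" using above_0 l by (simp add: le_divide_eq)
    then show ?thesis using 2 by (simp add: P01_def)
  next
    case 3
    then have "g = l * u" using below_1 above_0 by simp
    then have "g / l = u" using l by simp
    then show ?thesis using 3 by (simp add: P01_def)
  qed
qed

lemma interaction_dom_borel:
  assumes "open \<Omega>"
  shows "interaction_dom \<Omega> \<gamma> \<in> sets borel"
proof -
  define W where "W = {y. \<exists>x\<in>\<Omega>. \<gamma> (x - y) \<noteq> 0}"
  have "open W"
    unfolding open_contains_ball
  proof
    fix y assume "y \<in> W"
    then obtain x where x: "x \<in> \<Omega>" "\<gamma> (x - y) \<noteq> 0" by (auto simp: W_def)
    obtain e where e: "0 < e" "ball x e \<subseteq> \<Omega>" using assms x(1) open_contains_ball by blast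
    have "ball y e \<subseteq> W"
    proof
      fix y' assume "y' \<in> ball y e"
      then have "x + (y' - y) \<in> ball x e" by (simp add: dist_norm norm_minus_commute)
      then have "x + (y' - y) \<in> \<Omega>" using e by blast
      moreover have "(x + (y' - y)) - y' = x - y" by simp
      ultimately show "y' \<in> W" using x(2) unfolding W_def
        by (intro CollectI bexI[of _ "x + (y' - y)"]) simp_all
    qed
    then show "\<exists>e>0. ball y e \<subseteq> W" using e(1) by blast
  qed
  moreover have "interaction_dom \<Omega> \<gamma> = W - \<Omega>" by (auto simp: interaction_dom_def W_def)
  ultimately show ?thesis using assms by (simp add: sets.Diff)
qed

lemma interaction_dom_bounded:
  assumes "bounded \<Omega>" and supp: "\<And>z. \<gamma> z \<noteq> 0 \<Longrightarrow> norm z \<le> \<delta>"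
  shows "bounded (interaction_dom \<Omega> \<gamma>)"
proof -
  obtain B where B: "\<And>x. x \<in> \<Omega> \<Longrightarrow> norm x \<le> B" using assms(1) by (auto simp: bounded_iff)
  have "norm y \<le> B + \<delta>" if y: "y \<in> interaction_dom \<Omega> \<gamma>" for y
  proof -
    obtain x where x: "x \<in> \<Omega>" "\<gamma> (x - y) \<noteq> 0" using y by (auto simp: interaction_dom_def)
    then have "norm (x - y) \<le> \<delta>" using supp by blast
    moreover have "norm y \<le> norm x + norm (x - y)" using norm_triangle_ineq4[of x "x - y"] by simp
    ultimately show ?thesis using B[OF x(1)] by linarith
  qed
  then show ?thesis unfolding bounded_iff by blast
qed

lemma nonneg_integrable_lebesgue_borel_representative:
  fixes \<gamma> :: "'a::euclidean_space \<Rightarrow> real"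
  assumes nonneg: "\<And>x. 0 \<le> \<gamma> x" and int: "integrable lebesgue \<gamma>"
  obtains g where "g \<in> borel_measurable borel" "\<And>x. 0 \<le> g x" "integrable lborel g"
    "AE x in lebesgue. \<gamma> x = g x"
proof -
  obtain g0 where g0_lborel: "g0 \<in> borel_measurable lborel" and g0_ae: "AE x in lborel. \<gamma> x = g0 x"
    using completion_ex_borel_measurable_real[OF borel_measurable_integrable[OF int]] by blast
  have [measurable]: "g0 \<in> borel_measurable borel" using g0_lborel by simp
  define g where "g x = max 0 (g0 x)" for x
  have g_borel: "g \<in> borel_measurable borel" unfolding g_def by measurable
  have "AE x in lebesgue. \<gamma> x = g0 x" using g0_ae by (simp add: AE_completion_iff)
  then have ae: "AE x in lebesgue. \<gamma> x = g x"
    by eventually_elim (metis g_def nonneg max.absorb2)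
  have g_lborel: "g \<in> borel_measurable lborel" using g_borel by simp
  have "integrable lebesgue g"
    by (rule integrable_cong_AE_imp[OF int measurable_completion[OF g_lborel] ae])
  then have "integrable lborel g"
    using integrable_completion[OF g_lborel] by blast
  moreover have "0 \<le> g x" for x by (simp add: g_def)
  ultimately show ?thesis by (intro that[OF g_borel _ _ ae])
qed

text \<open>The kernel \<open>\<gamma>\<close> is only Lebesgue measurable; \<open>g\<close> is a nonnegative Borel representative
  of it, which is what the product-measure arguments (Fubini, translations) need.\<close>
locale nonlocal_kernel =
  fixes \<Omega> :: "'a::euclidean_space set" and \<gamma> g :: "'a \<Rightarrow> real"
  assumes Omega_open: "open \<Omega>" and Omega_bounded: "bounded \<Omega>"
    and g_borel[measurable]: "g \<in> borel_measurable borel" and g_nonneg: "\<And>x. 0 \<le> g x"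
    and g_integrable: "integrable lborel g"
    and gamma_AE_eq: "AE x in lebesgue. \<gamma> x = g x"
    and interaction_dom_borel[measurable]: "interaction_dom \<Omega> \<gamma> \<in> sets borel"
    and interaction_dom_bounded: "bounded (interaction_dom \<Omega> \<gamma>)"
begin

abbreviation \<Omega>\<^sub>I :: "'a set" where "\<Omega>\<^sub>I \<equiv> interaction_dom \<Omega> \<gamma>"

abbreviation U :: "'a set" where "U \<equiv> \<Omega> \<union> \<Omega>\<^sub>I"

lemma Omega_borel[measurable]: "\<Omega> \<in> sets borel"
  using Omega_open by auto

lemma Omega_lebesgue: "\<Omega> \<in> sets lebesgue"
  by simp

lemma U_lebesgue: "U \<in> sets lebesgue"
  by simp

lemma Omega_disjoint: "\<Omega> \<inter> \<Omega>\<^sub>I = {}"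
  by (auto simp: interaction_dom_def)

lemma emeasure_U_finite: "emeasure lborel U < \<infinity>"
  using Omega_bounded interaction_dom_bounded by (intro emeasure_bounded_finite) auto

lemma emeasure_lebesgue_finite:
  assumes "S \<subseteq> U" "S \<in> sets lebesgue"
  shows "emeasure lebesgue S < \<infinity>"
proof -
  have "emeasure lebesgue S \<le> emeasure lebesgue U"
    using assms by (intro emeasure_mono) auto
  also have "\<dots> = emeasure lborel U"
    by (simp add: emeasure_completion)
  finally show ?thesis using emeasure_U_finite by (simp add: le_less_trans)
qed

lemma nn_integral_g_finite: "(\<integral>\<^sup>+ z. ennreal (g z) \<partial>lborel) < \<infinity>"
  using g_integrable g_nonneg unfolding integrable_iff_bounded by simp

lemma integrable_g_shift: "integrable lborel (\<lambda>y. g (x - y))"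
proof -
  have "(\<integral>\<^sup>+ y. ennreal (norm (g (x - y))) \<partial>lborel) = (\<integral>\<^sup>+ z. ennreal (g z) \<partial>lborel)"
    using g_nonneg nn_integral_lborel_reflect[of "\<lambda>z. ennreal (g z)" x] by simp
  then show ?thesis using nn_integral_g_finite by (intro integrableI_bounded) auto
qed

lemma gamma_shift_AE_eq: "AE y in lebesgue. \<gamma> (x - y) = g (x - y)"
  using AE_lebesgue_reflect[OF gamma_AE_eq] .

lemma set_integrable_gamma_shift: "set_integrable lebesgue U (\<lambda>y. \<gamma> (x - y))"
proof -
  have "integrable lebesgue (\<lambda>y. g (x - y))"
    using integrable_g_shift[of x] by (subst integrable_completion) measurable
  then have int: "integrable lebesgue (\<lambda>y. indicator U y *\<^sub>R g (x - y))"
    by (rule integrable_mult_indicator[OF U_lebesgue])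
  have ae: "AE y in lebesgue. indicator U y *\<^sub>R g (x - y) = indicator U y *\<^sub>R \<gamma> (x - y)"
    using gamma_shift_AE_eq[of x] by eventually_elim simp
  have "(\<lambda>y. indicator U y *\<^sub>R g (x - y)) \<in> borel_measurable lebesgue"
    by (rule measurable_completion) measurable
  then show ?thesis unfolding set_integrable_def
    by (rule integrable_cong_AE_imp[OF int borel_measurable_lebesgue_AE_eq] ae)
       (use ae in \<open>auto elim: eventually_mono\<close>)
qed

text \<open>Tonelli: \<open>\<integral>\<integral> g(x - y) |v y| dy dx = \<parallel>g\<parallel>\<^sub>1 \<parallel>v\<parallel>\<^sub>1\<close>.\<close>
lemma AE_integrable_g_conv:
  assumes [measurable]: "v \<in> borel_measurable borel" and v: "integrable lborel v"
  shows "AE x in lborel. integrable lborel (\<lambda>y. g (x - y) * v y)"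
proof -
  let ?f = "\<lambda>x y. ennreal (norm (g (x - y) * v y))"
  have "(\<integral>\<^sup>+ x. (\<integral>\<^sup>+ y. ?f x y \<partial>lborel) \<partial>lborel) = (\<integral>\<^sup>+ y. (\<integral>\<^sup>+ x. ?f x y \<partial>lborel) \<partial>lborel)"
    by (rule lborel_pair.Fubini'[symmetric]) measurable
  also have "\<dots> = (\<integral>\<^sup>+ y. ennreal (norm (v y)) * (\<integral>\<^sup>+ z. ennreal (g z) \<partial>lborel) \<partial>lborel)"
  proof (rule nn_integral_cong)
    fix y
    have "(\<integral>\<^sup>+ x. ?f x y \<partial>lborel) = (\<integral>\<^sup>+ x. ennreal (norm (v y)) * ennreal (g (x - y)) \<partial>lborel)"
      using g_nonneg by (intro nn_integral_cong) (auto simp: abs_mult ennreal_mult' mult.commute)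
    also have "\<dots> = ennreal (norm (v y)) * (\<integral>\<^sup>+ x. ennreal (g (x - y)) \<partial>lborel)"
      by (rule nn_integral_cmult) measurable
    also have "(\<integral>\<^sup>+ x. ennreal (g (x - y)) \<partial>lborel) = (\<integral>\<^sup>+ z. ennreal (g z) \<partial>lborel)"
      by (rule nn_integral_lborel_translate[of "\<lambda>z. ennreal (g z)"]) measurable
    finally show "(\<integral>\<^sup>+ x. ?f x y \<partial>lborel) = ennreal (norm (v y)) * (\<integral>\<^sup>+ z. ennreal (g z) \<partial>lborel)" .
  qed
  also have "\<dots> = (\<integral>\<^sup>+ y. ennreal (norm (v y)) \<partial>lborel) * (\<integral>\<^sup>+ z. ennreal (g z) \<partial>lborel)"
    by (rule nn_integral_multc) measurable
  also have "\<dots> < \<infinity>"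
    using v nn_integral_g_finite unfolding integrable_iff_bounded by (simp add: ennreal_mult_less_top)
  finally have "AE x in lborel. (\<integral>\<^sup>+ y. ?f x y \<partial>lborel) \<noteq> \<infinity>"
    by (intro nn_integral_PInf_AE) auto
  then show ?thesis
    by eventually_elim (intro integrableI_bounded, measurable, simp add: top.not_eq_extremum)
qed

lemma
  assumes v: "set_integrable lebesgue U v"
  shows AE_set_integrable_conv: "AE x in lebesgue. set_integrable lebesgue U (\<lambda>y. \<gamma> (x - y) * v y)"
    and borel_measurable_conv: "conv \<gamma> U v \<in> borel_measurable lebesgue"
proof -
  have vm: "(\<lambda>y. indicator U y * v y) \<in> borel_measurable lebesgue"
    and vi: "integrable lebesgue (\<lambda>y. indicator U y * v y)"
    using v unfolding set_integrable_def by auto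
  obtain v' where v'm[measurable]: "v' \<in> borel_measurable lborel"
    and v'ae: "AE y in lborel. indicator U y * v y = v' y"
    using completion_ex_borel_measurable_real[OF vm] by blast
  have v'_borel[measurable]: "v' \<in> borel_measurable borel" using v'm by simp
  have v'ae2: "AE y in lebesgue. indicator U y * v y = v' y"
    using v'ae by (simp add: AE_completion_iff)
  have "integrable lebesgue v'"
    by (rule integrable_cong_AE_imp[OF vi measurable_completion[OF v'm] v'ae2])
  then have v'i: "integrable lborel v'"
    using integrable_completion[OF v'm] by simp
  have eqae: "AE y in lebesgue. indicator U y *\<^sub>R (\<gamma> (x - y) * v y) = g (x - y) * v' y" for x
    using gamma_shift_AE_eq[of x] v'ae2 by eventually_elim (auto simp: indicator_def)
  have gvm: "(\<lambda>y. g (x - y) * v' y) \<in> borel_measurable lebesgue" for x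
    by (rule measurable_completion) measurable
  have lhsm: "(\<lambda>y. indicator U y *\<^sub>R (\<gamma> (x - y) * v y)) \<in> borel_measurable lebesgue" for x
    by (rule borel_measurable_lebesgue_AE_eq[OF gvm eqae])
  have conv_eq: "conv \<gamma> U v x = (\<integral>y. g (x - y) * v' y \<partial>lborel)" for x
  proof -
    have "conv \<gamma> U v x = (\<integral>y. g (x - y) * v' y \<partial>lebesgue)"
      unfolding conv_def set_lebesgue_integral_def
      by (rule integral_cong_AE[OF lhsm gvm eqae])
    also have "\<dots> = (\<integral>y. g (x - y) * v' y \<partial>lborel)"
      by (rule integral_completion) measurable
    finally show ?thesis .
  qed
  have "(\<lambda>x. \<integral>y. g (x - y) * v' y \<partial>lborel) \<in> borel_measurable lborel"
    by measurable
  then show "conv \<gamma> U v \<in> borel_measurable lebesgue"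
    unfolding conv_eq by (rule measurable_completion)
  have "AE x in lebesgue. integrable lborel (\<lambda>y. g (x - y) * v' y)"
    using AE_integrable_g_conv[OF v'_borel v'i] by (simp add: AE_completion_iff)
  then show "AE x in lebesgue. set_integrable lebesgue U (\<lambda>y. \<gamma> (x - y) * v y)"
  proof eventually_elim
    case (elim x)
    then have "integrable lebesgue (\<lambda>y. g (x - y) * v' y)"
      by (subst integrable_completion) measurable
    then show ?case
      unfolding set_integrable_def
      by (rule integrable_cong_AE_imp[OF _ lhsm]) (use eqae[of x] in \<open>auto elim: eventually_mono\<close>)
  qed
qed

lemma nonloc_eq_conv_AE:
  assumes v: "set_integrable lebesgue U v"
    and c\<gamma>: "\<forall>x\<in>\<Omega>. c\<gamma> = (LINT y:U|lebesgue. \<gamma> (x - y))"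
  shows "AE x in lebesgue. x \<in> \<Omega> \<longrightarrow> nonloc \<gamma> U v x = c\<gamma> * v x - conv \<gamma> U v x"
  using AE_set_integrable_conv[OF v]
proof eventually_elim
  case (elim x)
  show ?case
  proof
    assume x: "x \<in> \<Omega>"
    have i1: "integrable lebesgue (\<lambda>y. indicator U y *\<^sub>R \<gamma> (x - y))"
      using set_integrable_gamma_shift[of x] unfolding set_integrable_def .
    have i2: "integrable lebesgue (\<lambda>y. indicator U y *\<^sub>R (\<gamma> (x - y) * v y))"
      using elim unfolding set_integrable_def .
    have "nonloc \<gamma> U v x =
        (\<integral>y. v x * (indicator U y *\<^sub>R \<gamma> (x - y)) - indicator U y *\<^sub>R (\<gamma> (x - y) * v y) \<partial>lebesgue)"
      unfolding nonloc_def set_lebesgue_integral_def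
      by (rule Bochner_Integration.integral_cong) (auto simp: algebra_simps)
    also have "\<dots> = v x * (\<integral>y. indicator U y *\<^sub>R \<gamma> (x - y) \<partial>lebesgue)
        - (\<integral>y. indicator U y *\<^sub>R (\<gamma> (x - y) * v y) \<partial>lebesgue)"
      using i1 i2 by simp
    also have "\<dots> = c\<gamma> * v x - conv \<gamma> U v x"
      using c\<gamma> x unfolding conv_def set_lebesgue_integral_def by simp
    finally show "nonloc \<gamma> U v x = c\<gamma> * v x - conv \<gamma> U v x" .
  qed
qed

lemma integrable_indicator_U_g_shift:
  assumes [measurable]: "\<zeta> \<in> borel_measurable borel" and \<zeta>_bound: "\<And>y. \<bar>\<zeta> y\<bar> \<le> 1"
  shows "integrable lborel (\<lambda>y. indicator U y * \<zeta> y * g (x - y))"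
proof (rule Bochner_Integration.integrable_bound)
  show "integrable lborel (\<lambda>y. indicator U y * g (x - y))"
    using integrable_mult_indicator[OF _ integrable_g_shift[of x], of U] by simp
  show "AE y in lborel. norm (indicator U y * \<zeta> y * g (x - y)) \<le> norm (indicator U y * g (x - y))"
    using \<zeta>_bound g_nonneg by (intro AE_I2) (auto simp: indicator_def abs_mult mult_left_le_one_le)
qed measurable

lemma nonloc_eq_lborel:
  assumes \<zeta>[measurable]: "\<zeta> \<in> borel_measurable borel" and \<zeta>_bound: "\<And>y. \<bar>\<zeta> y\<bar> \<le> 1"
  shows "nonloc \<gamma> U \<zeta> x = \<zeta> x * (\<integral>y. indicator U y * g (x - y) \<partial>lborel)
      - (\<integral>y. indicator U y * \<zeta> y * g (x - y) \<partial>lborel)"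
proof -
  let ?R = "\<lambda>y. indicator U y * ((\<zeta> x - \<zeta> y) * g (x - y))"
  have R_meas: "?R \<in> borel_measurable lebesgue" by (rule measurable_completion) measurable
  have ae: "AE y in lebesgue. indicator U y *\<^sub>R ((\<zeta> x - \<zeta> y) * \<gamma> (x - y)) = ?R y"
    using gamma_shift_AE_eq[of x] by eventually_elim simp
  have "nonloc \<gamma> U \<zeta> x = (\<integral>y. ?R y \<partial>lebesgue)"
    unfolding nonloc_def set_lebesgue_integral_def
    by (rule integral_cong_AE[OF borel_measurable_lebesgue_AE_eq[OF R_meas ae] R_meas ae])
  also have "\<dots> = (\<integral>y. ?R y \<partial>lborel)"
    by (rule integral_completion) measurable
  also have "\<dots> = (\<integral>y. \<zeta> x * (indicator U y * 1 * g (x - y)) - indicator U y * \<zeta> y * g (x - y) \<partial>lborel)"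
    by (rule Bochner_Integration.integral_cong) (auto simp: algebra_simps)
  finally show ?thesis
    using integrable_indicator_U_g_shift[of "\<lambda>_. 1" x] integrable_indicator_U_g_shift[OF \<zeta> \<zeta>_bound, of x]
    by simp
qed

end

section \<open>Test functions with vanishing nonlocal Neumann operator\<close>

context nonlocal_kernel
begin

definition kernel_mass :: "'a \<Rightarrow> ennreal" where
  "kernel_mass x = (\<integral>\<^sup>+y. ennreal (g (x - y)) * indicator U y \<partial>lborel)"

lemma borel_measurable_kernel_mass[measurable]: "kernel_mass \<in> borel_measurable borel"
proof -
  have "kernel_mass \<in> borel_measurable lborel" unfolding kernel_mass_def[abs_def] by measurable
  then show ?thesis by simp
qed

lemma kernel_mass_finite: "kernel_mass x < \<infinity>"
proof -
  have "kernel_mass x \<le> (\<integral>\<^sup>+y. ennreal (g (x - y)) \<partial>lborel)"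
    unfolding kernel_mass_def by (intro nn_integral_mono) (auto simp: indicator_def)
  also have "\<dots> = (\<integral>\<^sup>+ z. ennreal (g z) \<partial>lborel)"
    by (rule nn_integral_lborel_reflect) measurable
  finally show ?thesis using nn_integral_g_finite by (simp add: le_less_trans)
qed

lemma kernel_mass_eq_integral:
  "kernel_mass x = ennreal (\<integral>y. indicator U y * g (x - y) \<partial>lborel)"
proof -
  have "kernel_mass x = (\<integral>\<^sup>+y. ennreal (indicator U y * g (x - y)) \<partial>lborel)"
    unfolding kernel_mass_def by (intro nn_integral_cong) (auto simp: indicator_def)
  also have "\<dots> = ennreal (\<integral>y. indicator U y * g (x - y) \<partial>lborel)"
    using g_nonneg integrable_mult_indicator[OF _ integrable_g_shift[of x], of U]
    by (intro nn_integral_eq_integral) auto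
  finally show ?thesis .
qed

text \<open>A fixed point \<open>v\<close> of \<open>exterior_step h\<close> makes \<open>\<zeta> = h + v\<close> on \<open>\<Omega>\<^sub>I\<close> satisfy
  \<open>c \<zeta> = \<gamma> * \<zeta>\<close> there, i.e. \<open>N \<zeta> = 0\<close>; the step is monotone and preserves the bound \<open>1\<close>,
  so the supremum of its iterates from \<open>0\<close> is such a fixed point.\<close>
definition exterior_step :: "('a \<Rightarrow> real) \<Rightarrow> ('a \<Rightarrow> ennreal) \<Rightarrow> 'a \<Rightarrow> ennreal" where
  "exterior_step h v x =
    (\<integral>\<^sup>+y. ennreal (g (x - y)) * (ennreal (h y) + indicator \<Omega>\<^sub>I y * v y) \<partial>lborel) / kernel_mass x"

definition exterior_fixpoint :: "('a \<Rightarrow> real) \<Rightarrow> 'a \<Rightarrow> ennreal" where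
  "exterior_fixpoint h x = (SUP n. (exterior_step h ^^ n) (\<lambda>_. 0) x)"

definition nonlocal_harmonic_extension :: "('a \<Rightarrow> real) \<Rightarrow> 'a \<Rightarrow> real" where
  "nonlocal_harmonic_extension h y = h y + indicator \<Omega>\<^sub>I y * enn2real (exterior_fixpoint h y)"

lemma borel_measurable_exterior_step:
  assumes [measurable]: "h \<in> borel_measurable borel" "v \<in> borel_measurable borel"
  shows "exterior_step h v \<in> borel_measurable borel"
proof -
  have "(\<lambda>x. \<integral>\<^sup>+y. ennreal (g (x - y)) * (ennreal (h y) + indicator \<Omega>\<^sub>I y * v y) \<partial>lborel)
      \<in> borel_measurable lborel"
    by measurable
  then show ?thesis unfolding exterior_step_def[abs_def] by simp
qed

lemma exterior_step_mono:
  assumes "\<And>y. v y \<le> w y"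
  shows "exterior_step h v x \<le> exterior_step h w x"
  unfolding exterior_step_def
  by (intro divide_right_mono_ennreal nn_integral_mono mult_left_mono add_left_mono)
     (use assms in \<open>auto simp: indicator_def\<close>)

lemma exterior_step_numerator_le_kernel_mass:
  assumes h: "\<And>y. 0 \<le> h y \<and> h y \<le> 1" "\<And>y. y \<notin> \<Omega> \<Longrightarrow> h y = 0" and v: "\<And>y. v y \<le> 1"
  shows "(\<integral>\<^sup>+y. ennreal (g (x - y)) * (ennreal (h y) + indicator \<Omega>\<^sub>I y * v y) \<partial>lborel) \<le> kernel_mass x"
  unfolding kernel_mass_def
proof (intro nn_integral_mono mult_left_mono)
  fix y
  show "ennreal (h y) + indicator \<Omega>\<^sub>I y * v y \<le> indicator U y"
  proof (cases "y \<in> \<Omega>")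
    case True
    then have "y \<notin> \<Omega>\<^sub>I" using Omega_disjoint by auto
    then show ?thesis using True h(1)[of y] by simp
  next
    case False
    then show ?thesis using v[of y] h(2)[of y] by (auto simp: indicator_def)
  qed
qed simp

lemma exterior_step_le_1:
  assumes h: "\<And>y. 0 \<le> h y \<and> h y \<le> 1" "\<And>y. y \<notin> \<Omega> \<Longrightarrow> h y = 0" and v: "\<And>y. v y \<le> 1"
  shows "exterior_step h v x \<le> 1"
proof (cases "kernel_mass x = 0")
  case True
  then show ?thesis
    using exterior_step_numerator_le_kernel_mass[OF h v, where x=x] by (simp add: exterior_step_def)
next
  case False
  have "exterior_step h v x \<le> kernel_mass x / kernel_mass x"
    unfolding exterior_step_def
    by (intro divide_right_mono_ennreal exterior_step_numerator_le_kernel_mass h v)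
  also have "\<dots> = 1" using False kernel_mass_finite[of x] by simp
  finally show ?thesis .
qed

lemma exterior_iterates_incseq: "incseq (\<lambda>n. (exterior_step h ^^ n) (\<lambda>_. 0) y)"
proof -
  have "(exterior_step h ^^ n) (\<lambda>_. 0) y \<le> (exterior_step h ^^ Suc n) (\<lambda>_. 0) y" for n
    by (induction n arbitrary: y) (auto intro: exterior_step_mono)
  then show ?thesis by (rule incseq_SucI)
qed

context
  fixes h :: "'a \<Rightarrow> real"
  assumes h_borel[measurable]: "h \<in> borel_measurable borel"
    and h_01: "\<And>y. 0 \<le> h y \<and> h y \<le> 1" and h_outside: "\<And>y. y \<notin> \<Omega> \<Longrightarrow> h y = 0"
begin

lemma borel_measurable_exterior_fixpoint[measurable]:
  "exterior_fixpoint h \<in> borel_measurable borel"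
proof -
  have "(exterior_step h ^^ n) (\<lambda>_. 0) \<in> borel_measurable borel" for n
    by (induction n) (auto intro: borel_measurable_exterior_step)
  then show ?thesis unfolding exterior_fixpoint_def[abs_def] by measurable
qed

lemma exterior_fixpoint_le_1: "exterior_fixpoint h y \<le> 1"
proof -
  have "(exterior_step h ^^ n) (\<lambda>_. 0) y \<le> 1" for n
    by (induction n arbitrary: y) (simp_all add: exterior_step_le_1[OF h_01 h_outside])
  then show ?thesis unfolding exterior_fixpoint_def by (intro SUP_least)
qed

lemma exterior_step_fixpoint: "exterior_step h (exterior_fixpoint h) x = exterior_fixpoint h x"
proof -
  let ?v = "\<lambda>n. (exterior_step h ^^ n) (\<lambda>_. 0)"
  let ?F = "\<lambda>n y. ennreal (g (x - y)) * (ennreal (h y) + indicator \<Omega>\<^sub>I y * ?v n y)"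
  have v_meas[measurable]: "?v n \<in> borel_measurable borel" for n
    by (induction n) (auto intro: borel_measurable_exterior_step)
  have "incseq ?F"
    using exterior_iterates_incseq
    by (intro incseq_SucI le_funI mult_left_mono add_left_mono) (auto simp: incseq_Suc_iff)
  then have "(\<integral>\<^sup>+y. (SUP n. ?F n y) \<partial>lborel) = (SUP n. \<integral>\<^sup>+y. ?F n y \<partial>lborel)"
    by (rule nn_integral_monotone_convergence_SUP) measurable
  moreover have "(SUP n. ?F n y) =
      ennreal (g (x - y)) * (ennreal (h y) + indicator \<Omega>\<^sub>I y * exterior_fixpoint h y)" for y
    unfolding exterior_fixpoint_def by (simp add: SUP_mult_left_ennreal ennreal_SUP_add_right)
  ultimately have "exterior_step h (exterior_fixpoint h) x = (SUP n. \<integral>\<^sup>+y. ?F n y \<partial>lborel) / kernel_mass x"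
    by (simp add: exterior_step_def)
  also have "\<dots> = (SUP n. ?v (Suc n) x)"
    by (simp add: divide_ennreal_def SUP_mult_right_ennreal exterior_step_def)
  also have "\<dots> = exterior_fixpoint h x"
    unfolding exterior_fixpoint_def
  proof (rule antisym)
    show "(SUP n. ?v (Suc n) x) \<le> (SUP n. ?v n x)"
      by (intro SUP_least SUP_upper2[of "Suc _"]) auto
    show "(SUP n. ?v n x) \<le> (SUP n. ?v (Suc n) x)"
      using incseq_SucD[OF exterior_iterates_incseq] by (intro SUP_mono) blast
  qed
  finally show ?thesis .
qed

lemma nonlocal_harmonic_extension_01:
  "0 \<le> nonlocal_harmonic_extension h y \<and> nonlocal_harmonic_extension h y \<le> 1"
proof (cases "y \<in> \<Omega>\<^sub>I")
  case True
  then have "h y = 0" using Omega_disjoint h_outside by auto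
  moreover have "enn2real (exterior_fixpoint h y) \<le> 1"
    using enn2real_mono[OF exterior_fixpoint_le_1] by simp
  ultimately show ?thesis using True by (simp add: nonlocal_harmonic_extension_def)
next
  case False
  then show ?thesis using h_01[of y] by (simp add: nonlocal_harmonic_extension_def)
qed

lemma borel_measurable_nonlocal_harmonic_extension[measurable]:
  "nonlocal_harmonic_extension h \<in> borel_measurable borel"
  unfolding nonlocal_harmonic_extension_def[abs_def] by measurable

lemma exterior_step_numerator_eq_integral:
  "(\<integral>\<^sup>+y. ennreal (g (x - y)) * (ennreal (h y) + indicator \<Omega>\<^sub>I y * exterior_fixpoint h y) \<partial>lborel)
    = ennreal (\<integral>y. indicator U y * nonlocal_harmonic_extension h y * g (x - y) \<partial>lborel)"
proof -
  let ?\<zeta> = "nonlocal_harmonic_extension h"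
  have \<zeta>_01: "0 \<le> ?\<zeta> y" "?\<zeta> y \<le> 1" for y
    using nonlocal_harmonic_extension_01 by auto
  have \<zeta>_ennreal: "ennreal (h y) + indicator \<Omega>\<^sub>I y * exterior_fixpoint h y = ennreal (indicator U y * ?\<zeta> y)"
    for y
  proof (cases "y \<in> \<Omega>\<^sub>I")
    case True
    then have "h y = 0" using Omega_disjoint h_outside by auto
    moreover have "exterior_fixpoint h y < \<infinity>"
      using exterior_fixpoint_le_1[of y] by (simp add: le_less_trans)
    ultimately show ?thesis using True by (simp add: nonlocal_harmonic_extension_def)
  next
    case False
    then show ?thesis using h_outside[of y] by (simp add: nonlocal_harmonic_extension_def indicator_def)
  qed
  have "(\<integral>\<^sup>+y. ennreal (g (x - y)) * (ennreal (h y) + indicator \<Omega>\<^sub>I y * exterior_fixpoint h y) \<partial>lborel)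
      = (\<integral>\<^sup>+y. ennreal (indicator U y * ?\<zeta> y * g (x - y)) \<partial>lborel)"
    using \<zeta>_01 g_nonneg
    by (intro nn_integral_cong) (simp add: \<zeta>_ennreal ennreal_mult' mult.commute)
  also have "\<dots> = ennreal (\<integral>y. indicator U y * ?\<zeta> y * g (x - y) \<partial>lborel)"
    using g_nonneg \<zeta>_01 integrable_indicator_U_g_shift[of ?\<zeta> x]
    by (intro nn_integral_eq_integral) (auto simp: indicator_def)
  finally show ?thesis .
qed

lemma nonloc_nonlocal_harmonic_extension:
  assumes x: "x \<in> \<Omega>\<^sub>I"
  shows "nonloc \<gamma> U (nonlocal_harmonic_extension h) x = 0"
proof -
  let ?\<zeta> = "nonlocal_harmonic_extension h"
  define S where "S = (\<integral>\<^sup>+y. ennreal (g (x - y)) * (ennreal (h y) + indicator \<Omega>\<^sub>I y * exterior_fixpoint h y) \<partial>lborel)"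
  have \<zeta>_01: "0 \<le> ?\<zeta> y" "?\<zeta> y \<le> 1" for y
    using nonlocal_harmonic_extension_01 by auto
  have S_le: "S \<le> kernel_mass x"
    unfolding S_def by (rule exterior_step_numerator_le_kernel_mass[OF h_01 h_outside exterior_fixpoint_le_1])
  have \<zeta>_x: "?\<zeta> x = enn2real (S / kernel_mass x)"
    using x Omega_disjoint h_outside[of x] exterior_step_fixpoint[of x]
    by (auto simp: nonlocal_harmonic_extension_def exterior_step_def S_def)
  have "?\<zeta> x * enn2real (kernel_mass x) = enn2real S"
  proof (cases "kernel_mass x = 0")
    case True
    then show ?thesis using S_le by simp
  next
    case False
    then have "S / kernel_mass x * kernel_mass x = S"
      using kernel_mass_finite[of x] by (simp add: ennreal_divide_times)
    then show ?thesis unfolding \<zeta>_x by (metis enn2real_mult)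
  qed
  moreover have "0 \<le> (\<integral>y. indicator U y * g (x - y) \<partial>lborel)"
    using g_nonneg by (intro integral_nonneg_AE) (auto simp: indicator_def)
  moreover have "0 \<le> (\<integral>y. indicator U y * ?\<zeta> y * g (x - y) \<partial>lborel)"
    using g_nonneg \<zeta>_01 by (intro integral_nonneg_AE AE_I2) (auto simp: indicator_def)
  ultimately show ?thesis
    using nonloc_eq_lborel[of ?\<zeta> x] \<zeta>_01
    by (simp add: kernel_mass_eq_integral S_def exterior_step_numerator_eq_integral abs_le_iff)
qed

lemma nonlocal_harmonic_extension_in_Kset: "nonlocal_harmonic_extension h \<in> Kset \<Omega> \<gamma>"
proof -
  let ?\<zeta> = "nonlocal_harmonic_extension h"
  have \<zeta>_01: "0 \<le> ?\<zeta> y \<and> ?\<zeta> y \<le> 1" for y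
    using nonlocal_harmonic_extension_01 .
  have "set_integrable lebesgue U (\<lambda>x. (?\<zeta> x)\<^sup>2)"
    unfolding set_integrable_def
  proof (subst integrable_completion)
    show "integrable lborel (\<lambda>x. indicator U x *\<^sub>R (?\<zeta> x)\<^sup>2)"
      by (rule integrableI_bounded_set[where A=U and B=1])
         (use emeasure_U_finite \<zeta>_01 in \<open>auto simp: indicator_def power_le_one abs_le_iff\<close>)
  qed measurable
  moreover have "(\<lambda>x. indicator U x * ?\<zeta> x) \<in> borel_measurable lebesgue"
    by (rule measurable_completion) measurable
  ultimately show ?thesis
    unfolding Kset_def V_B_def L2_def using \<zeta>_01 nonloc_nonlocal_harmonic_extension by auto
qed

end

lemma exists_Kset_extension:
  assumes h_meas: "h \<in> borel_measurable (restrict_space lebesgue \<Omega>)"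
    and h_01: "AE x in lebesgue. x \<in> \<Omega> \<longrightarrow> 0 \<le> h x \<and> h x \<le> 1"
  shows "\<exists>\<zeta>\<in>Kset \<Omega> \<gamma>. AE x in lebesgue. x \<in> \<Omega> \<longrightarrow> \<zeta> x = h x"
proof -
  have "(\<lambda>x. indicator \<Omega> x * h x) \<in> borel_measurable lebesgue"
    using h_meas by (simp add: borel_measurable_restrict_lebesgue_iff)
  then obtain h' where h'_lborel: "h' \<in> borel_measurable lborel"
    and h'_ae: "AE y in lborel. indicator \<Omega> y * h y = h' y"
    using completion_ex_borel_measurable_real by blast
  have [measurable]: "h' \<in> borel_measurable borel" using h'_lborel by simp
  define hh where "hh y = indicator \<Omega> y * max 0 (min 1 (h' y))" for y
  have hh_meas: "hh \<in> borel_measurable borel" unfolding hh_def by measurable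
  have hh_01: "0 \<le> hh y \<and> hh y \<le> 1" for y by (auto simp: hh_def indicator_def)
  have hh_outside: "y \<notin> \<Omega> \<Longrightarrow> hh y = 0" for y by (simp add: hh_def)
  have "AE y in lebesgue. indicator \<Omega> y * h y = h' y"
    using h'_ae by (simp add: AE_completion_iff)
  then have "AE x in lebesgue. x \<in> \<Omega> \<longrightarrow> nonlocal_harmonic_extension hh x = h x"
    using h_01
  proof eventually_elim
    case (elim x)
    show ?case
    proof
      assume x: "x \<in> \<Omega>"
      then have "h' x = h x" using elim(1) by simp
      then have "hh x = h x" using x elim(2) by (simp add: hh_def)
      moreover have "x \<notin> \<Omega>\<^sub>I" using x Omega_disjoint by auto
      ultimately show "nonlocal_harmonic_extension hh x = h x"
        by (simp add: nonlocal_harmonic_extension_def)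
    qed
  qed
  then show ?thesis
    using nonlocal_harmonic_extension_in_Kset[OF hh_meas hh_01 hh_outside] by blast
qed

end

context nonlocal_kernel
begin

lemma Kset_set_integrable: "u \<in> Kset \<Omega> \<gamma> \<Longrightarrow> set_integrable lebesgue U u"
  by (intro L2_set_integrable U_lebesgue emeasure_lebesgue_finite) (auto simp: Kset_def V_B_def)

lemma Kset_L2_Omega: "u \<in> Kset \<Omega> \<gamma> \<Longrightarrow> L2 \<Omega> u"
  by (rule L2_subset[where S=U]) (auto simp: Kset_def V_B_def)

lemma Kset_01: "u \<in> Kset \<Omega> \<gamma> \<Longrightarrow> AE x in lebesgue. x \<in> \<Omega> \<longrightarrow> 0 \<le> u x \<and> u x \<le> 1"
  by (simp add: Kset_def)

lemma nonlocal_variational_inequality_complementarity: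
  assumes u: "u \<in> Kset \<Omega> \<gamma>"
    and c\<gamma>: "\<forall>x\<in>\<Omega>. c\<gamma> = (LINT y:U|lebesgue. \<gamma> (x - y))"
    and f_meas[measurable]: "f \<in> borel_measurable (restrict_space lebesgue \<Omega>)"
    and F_eq: "AE x in lebesgue. x \<in> \<Omega> \<longrightarrow> F x = nonloc \<gamma> U u x - cF * u x - f x"
    and VI: "\<forall>\<zeta>\<in>Kset \<Omega> \<gamma>. ip \<Omega> F (\<lambda>x. \<zeta> x - u x) \<ge> 0"
  shows "AE x in lebesgue. x \<in> \<Omega> \<longrightarrow> 0 \<le> u x \<and> u x \<le> 1
    \<and> (u x < 1 \<longrightarrow> conv \<gamma> U u x + f x \<le> (c\<gamma> - cF) * u x)
    \<and> (0 < u x \<longrightarrow> (c\<gamma> - cF) * u x \<le> conv \<gamma> U u x + f x)"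
proof -
  have u_meas[measurable]: "u \<in> borel_measurable (restrict_space lebesgue \<Omega>)"
    using L2_borel_measurable_restrict[OF Kset_L2_Omega[OF u] Omega_lebesgue] .
  have [measurable]: "conv \<gamma> U u \<in> borel_measurable (restrict_space lebesgue \<Omega>)"
    using borel_measurable_conv[OF Kset_set_integrable[OF u]] by (rule measurable_restrict_space1)
  define Fa where "Fa x = (c\<gamma> - cF) * u x - (conv \<gamma> U u x + f x)" for x
  have Fa_meas: "Fa \<in> borel_measurable (restrict_space lebesgue \<Omega>)"
    unfolding Fa_def[abs_def] by measurable
  have "AE x in lebesgue. x \<in> \<Omega> \<longrightarrow> F x = Fa x"
    using F_eq nonloc_eq_conv_AE[OF Kset_set_integrable[OF u] c\<gamma>]
    by eventually_elim (auto simp: Fa_def algebra_simps)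
  moreover have "emeasure lebesgue \<Omega> < \<infinity>"
    by (rule emeasure_lebesgue_finite) auto
  ultimately have "AE x in lebesgue. x \<in> \<Omega> \<longrightarrow> (u x < 1 \<longrightarrow> 0 \<le> Fa x) \<and> (0 < u x \<longrightarrow> Fa x \<le> 0)"
    using variational_inequality_complementarity[OF Omega_lebesgue _ exists_Kset_extension u_meas Kset_01[OF u] Fa_meas _ VI]
    by blast
  then show ?thesis
    using Kset_01[OF u] by eventually_elim (auto simp: Fa_def)
qed

lemma time_step_projection:
  assumes c\<gamma>: "\<forall>x\<in>\<Omega>. c\<gamma> = (LINT y:U|lebesgue. \<gamma> (x - y))"
    and \<mu>: "0 < \<mu>" and \<tau>: "0 < \<tau>" and \<xi>: "0 \<le> c\<gamma> - cF"
    and m[measurable]: "m \<in> borel_measurable borel"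
    and \<theta>0[measurable]: "\<theta>0 \<in> borel_measurable (restrict_space lebesgue \<Omega>)"
    and u0: "u0 \<in> Kset \<Omega> \<gamma>" and u1: "u1 \<in> Kset \<Omega> \<gamma>" and w1: "L2 \<Omega> w1"
    and D2: "\<forall>\<psi>. L2 \<Omega> \<psi> \<longrightarrow> \<mu> * ip \<Omega> (\<lambda>x. u1 x - u0 x) \<psi> + \<tau> * ip \<Omega> w1 \<psi> = 0"
    and D3: "\<forall>\<zeta>\<in>Kset \<Omega> \<gamma>.
      ip \<Omega> (\<lambda>x. nonloc \<gamma> U u1 x - cF * u1 x + cF / 2 - cF * m (\<theta>0 x) - w1 x) (\<lambda>x. \<zeta> x - u1 x) \<ge> 0"
  shows "AE x in lebesgue. x \<in> \<Omega> \<longrightarrow>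
    u1 x = P01 ((\<mu> / \<tau> * u0 x + conv \<gamma> U u1 x + cF * m (\<theta>0 x) - cF / 2) / (\<mu> / \<tau> + (c\<gamma> - cF)))"
proof -
  have [measurable]: "u0 \<in> borel_measurable (restrict_space lebesgue \<Omega>)"
    "u1 \<in> borel_measurable (restrict_space lebesgue \<Omega>)"
    using L2_borel_measurable_restrict[OF Kset_L2_Omega Omega_lebesgue] u0 u1 by auto
  have "L2 \<Omega> (\<lambda>x. u1 x - u0 x)"
    using L2_lincomb[OF Kset_L2_Omega[OF u1] Kset_L2_Omega[OF u0], of 1 "-1"] by simp
  then have w1_eq: "AE x in lebesgue. x \<in> \<Omega> \<longrightarrow> \<tau> * w1 x + \<mu> * (u1 x - u0 x) = 0"
    by (rule ip_lincomb_orthogonal_imp_AE_eq_0[OF _ w1 D2])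
  let ?f = "\<lambda>x. \<mu> / \<tau> * (u0 x - u1 x) + cF * m (\<theta>0 x) - cF / 2"
  have f_meas: "?f \<in> borel_measurable (restrict_space lebesgue \<Omega>)"
    by measurable
  have "AE x in lebesgue. x \<in> \<Omega> \<longrightarrow>
      nonloc \<gamma> U u1 x - cF * u1 x + cF / 2 - cF * m (\<theta>0 x) - w1 x = nonloc \<gamma> U u1 x - cF * u1 x - ?f x"
    using w1_eq by eventually_elim (use \<tau> in \<open>auto simp: field_simps\<close>)
  from nonlocal_variational_inequality_complementarity[OF u1 c\<gamma> f_meas this D3]
  show ?thesis
  proof eventually_elim
    case (elim x)
    have "0 < \<mu> / \<tau> + (c\<gamma> - cF)" using \<mu> \<tau> \<xi> by (simp add: add_pos_nonneg)
    then show ?case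
      by (intro impI P01_eq_if_complementarity) (use elim in \<open>auto simp: algebra_simps\<close>)
  qed
qed

lemma steady_state_complementarity:
  assumes c\<gamma>: "\<forall>x\<in>\<Omega>. c\<gamma> = (LINT y:U|lebesgue. \<gamma> (x - y))"
    and m[measurable]: "m \<in> borel_measurable borel"
    and \<theta>[measurable]: "\<theta> \<in> borel_measurable (restrict_space lebesgue \<Omega>)"
    and u: "u \<in> Kset \<Omega> \<gamma>"
    and VI: "\<forall>\<zeta>\<in>Kset \<Omega> \<gamma>.
      ip \<Omega> (\<lambda>x. nonloc \<gamma> U u x - cF * u x + cF / 2 - cF * m (\<theta> x)) (\<lambda>x. \<zeta> x - u x) \<ge> 0"
  shows "AE x in lebesgue. x \<in> \<Omega> \<longrightarrow> 0 \<le> u x \<and> u x \<le> 1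
    \<and> (u x < 1 \<longrightarrow> conv \<gamma> U u x - cF / 2 + cF * m (\<theta> x) \<le> (c\<gamma> - cF) * u x)
    \<and> (0 < u x \<longrightarrow> (c\<gamma> - cF) * u x \<le> conv \<gamma> U u x - cF / 2 + cF * m (\<theta> x))"
proof -
  let ?f = "\<lambda>x. cF * m (\<theta> x) - cF / 2"
  have f_meas: "?f \<in> borel_measurable (restrict_space lebesgue \<Omega>)"
    by measurable
  have "AE x in lebesgue. x \<in> \<Omega> \<longrightarrow>
      nonloc \<gamma> U u x - cF * u x + cF / 2 - cF * m (\<theta> x) = nonloc \<gamma> U u x - cF * u x - ?f x"
    by simp
  from nonlocal_variational_inequality_complementarity[OF u c\<gamma> f_meas this VI]
  show ?thesis by (simp add: algebra_simps)
qed

lemma steady_state_projection: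
  assumes "\<forall>x\<in>\<Omega>. c\<gamma> = (LINT y:U|lebesgue. \<gamma> (x - y))" and \<xi>: "0 < c\<gamma> - cF"
    and "m \<in> borel_measurable borel" "\<theta> \<in> borel_measurable (restrict_space lebesgue \<Omega>)"
    and "u \<in> Kset \<Omega> \<gamma>"
    and "\<forall>\<zeta>\<in>Kset \<Omega> \<gamma>.
      ip \<Omega> (\<lambda>x. nonloc \<gamma> U u x - cF * u x + cF / 2 - cF * m (\<theta> x)) (\<lambda>x. \<zeta> x - u x) \<ge> 0"
  shows "AE x in lebesgue. x \<in> \<Omega> \<longrightarrow>
    u x = P01 ((conv \<gamma> U u x - cF / 2 + cF * m (\<theta> x)) / (c\<gamma> - cF))"
  using steady_state_complementarity[OF assms(1) assms(3-)]
proof eventually_elim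
  case (elim x)
  show ?case
    by (intro impI P01_eq_if_complementarity[OF \<xi>]) (use elim in auto)
qed

lemma steady_state_binary:
  assumes "\<forall>x\<in>\<Omega>. c\<gamma> = (LINT y:U|lebesgue. \<gamma> (x - y))" and \<xi>: "c\<gamma> - cF = 0"
    and "m \<in> borel_measurable borel" "\<theta> \<in> borel_measurable (restrict_space lebesgue \<Omega>)"
    and "u \<in> Kset \<Omega> \<gamma>"
    and "\<forall>\<zeta>\<in>Kset \<Omega> \<gamma>.
      ip \<Omega> (\<lambda>x. nonloc \<gamma> U u x - cF * u x + cF / 2 - cF * m (\<theta> x)) (\<lambda>x. \<zeta> x - u x) \<ge> 0"
    and null: "{x \<in> \<Omega>. conv \<gamma> U u x - cF / 2 + cF * m (\<theta> x) = 0} \<in> null_sets lebesgue"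
  shows "AE x in lebesgue. x \<in> \<Omega> \<longrightarrow> u x = 0 \<or> u x = 1"
  using steady_state_complementarity[OF assms(1) assms(3-6)] AE_not_in[OF null]
proof eventually_elim
  case (elim x)
  show ?case
  proof
    assume x: "x \<in> \<Omega>"
    then have "conv \<gamma> U u x - cF / 2 + cF * m (\<theta> x) \<noteq> 0" using elim(2) by simp
    then have "\<not> (0 < u x \<and> u x < 1)" using elim(1) x \<xi> by auto
    then show "u x = 0 \<or> u x = 1" using elim(1) x by auto
  qed
qed

end

theorem corollary4p3:
  fixes \<Omega> :: "'a::euclidean_space set"
    and \<gamma> :: "'a \<Rightarrow> real" and \<gamma>h :: "real \<Rightarrow> real"
    and \<sigma> \<delta> c\<gamma> D L \<mu> cF \<tau> \<xi> Cm :: real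
    and m m' :: "real \<Rightarrow> real"
  assumes dim: "DIM('a) \<le> 3"
    and dom_open: "open \<Omega>" and dom_conn: "connected \<Omega>" and dom_ne: "\<Omega> \<noteq> {}"
    and dom_bdd: "bounded \<Omega>"
    and gamma_nonneg: "\<forall>x. 0 \<le> \<gamma> x"
    and gamma_L1: "integrable lebesgue \<gamma>"
    and gamma_radial: "\<forall>x. \<gamma> x = \<gamma>h (norm x)"
    and sigma_pos: "0 < \<sigma>" and delta_pos: "0 < \<delta>"
    and supp_lower: "{0<..<\<sigma>} \<subseteq> {r. \<gamma>h r \<noteq> 0}"
    and supp_upper: "{r. \<gamma>h r \<noteq> 0} \<subseteq> {0<..\<delta>}"
    and c_gamma: "\<forall>x\<in>\<Omega>. c\<gamma> = (LINT y:(\<Omega> \<union> interaction_dom \<Omega> \<gamma>)|lebesgue. \<gamma> (x - y))"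
    and D_pos: "0 < D" and mu_pos: "0 < \<mu>" and cF_pos: "0 < cF" and tau_pos: "0 < \<tau>"
    and xi_def: "\<xi> = c\<gamma> - cF"
    and m_bound: "\<forall>s. \<bar>m s\<bar> \<le> 1/2"
    and m_deriv: "\<forall>s. (m has_real_derivative m' s) (at s)"
    and m'_bound: "\<forall>s. \<bar>m' s\<bar> \<le> Cm"
    and xi_nonneg: "0 \<le> \<xi>"
  shows
    "(\<forall>\<theta>0 G0 u0 \<theta>1 G1 u1 w1.
        H1 \<Omega> \<theta>0 G0 \<and> u0 \<in> Kset \<Omega> \<gamma> \<and>
        H1 \<Omega> \<theta>1 G1 \<and> u1 \<in> Kset \<Omega> \<gamma> \<and> L2 \<Omega> w1 \<and>
        (\<forall>\<phi> G\<phi>. H1 \<Omega> \<phi> G\<phi> \<longrightarrow>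
            ip \<Omega> (\<lambda>x. \<theta>1 x - \<theta>0 x) \<phi> + D * \<tau> * ip_grad \<Omega> G1 G\<phi>
              - L * ip \<Omega> (\<lambda>x. u1 x - u0 x) \<phi> = 0) \<and>
        (\<forall>\<psi>. L2 \<Omega> \<psi> \<longrightarrow> \<mu> * ip \<Omega> (\<lambda>x. u1 x - u0 x) \<psi> + \<tau> * ip \<Omega> w1 \<psi> = 0) \<and>
        (\<forall>\<zeta>\<in>Kset \<Omega> \<gamma>.
            ip \<Omega> (\<lambda>x. nonloc \<gamma> (\<Omega> \<union> interaction_dom \<Omega> \<gamma>) u1 x - cF * u1 x + cF / 2
                        - cF * m (\<theta>0 x) - w1 x)
                 (\<lambda>x. \<zeta> x - u1 x) \<ge> 0)
      \<longrightarrow> (AE x in lebesgue. x \<in> \<Omega> \<longrightarrow>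
            u1 x = P01 ((\<mu> / \<tau> * u0 x + conv \<gamma> (\<Omega> \<union> interaction_dom \<Omega> \<gamma>) u1 x
                         + cF * m (\<theta>0 x) - cF / 2) / (\<mu> / \<tau> + \<xi>))))
   \<and>
    (\<forall>u \<theta>.
        u \<in> Kset \<Omega> \<gamma> \<and> \<theta> \<in> borel_measurable (restrict_space lebesgue \<Omega>) \<and>
        (\<forall>\<zeta>\<in>Kset \<Omega> \<gamma>.
            ip \<Omega> (\<lambda>x. nonloc \<gamma> (\<Omega> \<union> interaction_dom \<Omega> \<gamma>) u x - cF * u x + cF / 2
                        - cF * m (\<theta> x))
                 (\<lambda>x. \<zeta> x - u x) \<ge> 0)
      \<longrightarrow> (0 < \<xi> \<longrightarrow> (AE x in lebesgue. x \<in> \<Omega> \<longrightarrow>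
              u x = P01 ((conv \<gamma> (\<Omega> \<union> interaction_dom \<Omega> \<gamma>) u x - cF / 2 + cF * m (\<theta> x)) / \<xi>)))
        \<and> (\<xi> = 0 \<and>
            {x \<in> \<Omega>. conv \<gamma> (\<Omega> \<union> interaction_dom \<Omega> \<gamma>) u x - cF / 2 + cF * m (\<theta> x) = 0}
              \<in> null_sets lebesgue
           \<longrightarrow> (AE x in lebesgue. x \<in> \<Omega> \<longrightarrow> u x = 0 \<or> u x = 1)))"
proof -
  have "\<And>z. \<gamma> z \<noteq> 0 \<Longrightarrow> norm z \<le> \<delta>"
    using gamma_radial supp_upper by fastforce
  then have interaction_dom: "interaction_dom \<Omega> \<gamma> \<in> sets borel" "bounded (interaction_dom \<Omega> \<gamma>)"
    using interaction_dom_borel[OF dom_open] interaction_dom_bounded[OF dom_bdd] by auto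
  obtain g where "g \<in> borel_measurable borel" "\<And>x. 0 \<le> g x" "integrable lborel g"
      "AE x in lebesgue. \<gamma> x = g x"
    using nonneg_integrable_lebesgue_borel_representative gamma_nonneg gamma_L1 by blast
  then have kernel: "nonlocal_kernel \<Omega> \<gamma> g"
    using dom_open dom_bdd interaction_dom by (intro nonlocal_kernel.intro)
  have m_borel: "m \<in> borel_measurable borel"
    using m_deriv by (intro borel_measurable_continuous_onI continuous_at_imp_continuous_on)
      (blast intro: DERIV_isCont)
  have \<theta>_meas: "\<theta> \<in> borel_measurable (restrict_space lebesgue \<Omega>)" if "H1 \<Omega> \<theta> G" for \<theta> G
    using that dom_open by (intro H1_borel_measurable_restrict) auto
  have \<xi>: "0 \<le> c\<gamma> - cF" using xi_nonneg xi_def by simp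
  note time_step = nonlocal_kernel.time_step_projection[OF kernel c_gamma mu_pos tau_pos \<xi> m_borel]
  note steady_projection = nonlocal_kernel.steady_state_projection[OF kernel c_gamma _ m_borel]
  note steady_binary = nonlocal_kernel.steady_state_binary[OF kernel c_gamma _ m_borel]
  show ?thesis
    unfolding xi_def
    by (intro conjI allI impI; elim conjE; rule time_step steady_projection steady_binary;
        (assumption | rule \<theta>_meas, assumption))
qed

end
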